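(* Every affine equivariant integrator map $\phi$ is closed under differentiation: for every Banach space $Y$ and every $f\in\mathfrak{X}(Y)$, $\phi(\delta f)=\delta\phi(f)$.
   Context: All spaces are real Banach spaces; $\mathfrak{X}(Y)$ denotes the smooth vector fields on $Y$. An integrator map $\phi$ is a collection of smooth maps $\phi_Y\colon\mathfrak{X}(Y)\to\mathfrak{X}(Y)$, one for each Banach space $Y$. For Gâteaux differentiable $\chi\colon Y\to U$, $f\sim_\chi g$ means $\chi'(y)f(y)=g(\chi(y))$ for all $y$. $\phi$ is affine equivariant if for every affine $A\colon Y\to U$ between Banach spaces, $f\sim_A g$ implies $\phi(f)\sim_A\phi(g)$. For $f\in\mathfrak X(Y)$, the tangent lift $\delta f\in\mathfrak X(Y\times Y)$ is $\delta f(y,\eta)=(f(y),f'(y)\eta)$. *)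

theory Defs
  imports "HOL-Analysis.Analysis"
begin

definition gderiv :: "('a::real_normed_vector \<Rightarrow> 'b::real_normed_vector) \<Rightarrow> 'a \<Rightarrow> 'a \<Rightarrow> 'b" where
  "gderiv f y v = Lim (at 0) (\<lambda>t::real. (f (y + t *\<^sub>R v) - f y) /\<^sub>R t)"

fun iter_dd :: "('a::real_normed_vector \<Rightarrow> 'b::real_normed_vector) \<Rightarrow> 'a list \<Rightarrow> 'a \<Rightarrow> 'b" where
  "iter_dd f [] = f"
| "iter_dd f (v # vs) = (\<lambda>x. gderiv (iter_dd f vs) x v)"

text \<open>Smoothness (C^infinity in the sense of Keller/Bastiani, which for maps between
  Banach spaces coincides with Frechet C^infinity): all iterated directional
  derivatives exist, and each d^n f is (sequentially, hence) continuous as a map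
  on the product of the domain with n copies of it.\<close>
definition smooth :: "('a::real_normed_vector \<Rightarrow> 'b::real_normed_vector) \<Rightarrow> bool" where
  "smooth f \<longleftrightarrow>
     (\<forall>vs v x. ((\<lambda>t::real. (iter_dd f vs (x + t *\<^sub>R v) - iter_dd f vs x) /\<^sub>R t)
                  \<longlongrightarrow> iter_dd f (v # vs) x) (at 0)) \<and>
     (\<forall>vs x (xs :: nat \<Rightarrow> 'a) (vss :: nat \<Rightarrow> 'a list).
        (\<forall>k. length (vss k) = length vs) \<longrightarrow> xs \<longlonglongrightarrow> x \<longrightarrow>
        (\<forall>i < length vs. (\<lambda>k. vss k ! i) \<longlonglongrightarrow> vs ! i) \<longrightarrow>
        (\<lambda>k. iter_dd f (vss k) (xs k)) \<longlonglongrightarrow> iter_dd f vs x)"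

definition vector_fields :: "('a::real_normed_vector \<Rightarrow> 'a) set" where
  "vector_fields = {f. smooth f}"

definition related :: "('a::real_normed_vector \<Rightarrow> 'b::real_normed_vector) \<Rightarrow> ('a \<Rightarrow> 'a) \<Rightarrow> ('b \<Rightarrow> 'b) \<Rightarrow> bool" where
  "related chi f g \<longleftrightarrow>
     (\<forall>y. ((\<lambda>t::real. (chi (y + t *\<^sub>R f y) - chi y) /\<^sub>R t) \<longlongrightarrow> g (chi y)) (at 0))"

definition affine_map :: "('a::real_normed_vector \<Rightarrow> 'b::real_normed_vector) \<Rightarrow> bool" where
  "affine_map A \<longleftrightarrow> (\<exists>L b. bounded_linear L \<and> A = (\<lambda>y. L y + b))"

text \<open>phi_Y : X(Y) -> X(Y) is a smooth map (convenient calculus: maps smooth curves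
  to smooth curves; a curve c : R -> X(Y) is smooth iff (t,y) |-> c t y is smooth).\<close>
definition integrator_component :: "(('a::real_normed_vector \<Rightarrow> 'a) \<Rightarrow> ('a \<Rightarrow> 'a)) \<Rightarrow> bool" where
  "integrator_component phi \<longleftrightarrow>
     (\<forall>f \<in> vector_fields. phi f \<in> vector_fields) \<and>
     (\<forall>c :: real \<Rightarrow> 'a \<Rightarrow> 'a. smooth (\<lambda>p. c (fst p) (snd p)) \<longrightarrow>
        smooth (\<lambda>p. phi (c (fst p)) (snd p)))"

definition affine_equivariant_pair ::
  "(('a::real_normed_vector \<Rightarrow> 'a) \<Rightarrow> ('a \<Rightarrow> 'a)) \<Rightarrow> (('b::real_normed_vector \<Rightarrow> 'b) \<Rightarrow> ('b \<Rightarrow> 'b)) \<Rightarrow> bool" where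
  "affine_equivariant_pair phi psi \<longleftrightarrow>
     (\<forall>(A :: 'a \<Rightarrow> 'b) f g. affine_map A \<longrightarrow> f \<in> vector_fields \<longrightarrow> g \<in> vector_fields \<longrightarrow>
        related A f g \<longrightarrow> related A (phi f) (psi g))"

definition tangent_lift :: "('a::real_normed_vector \<Rightarrow> 'a) \<Rightarrow> ('a \<times> 'a \<Rightarrow> 'a \<times> 'a)" where
  "tangent_lift f = (\<lambda>(y, eta). (f y, gderiv f y eta))"

end

theory Submission
  imports Defs
begin

text \<open>For \<open>h \<noteq> 0\<close> the secant lift \<open>S\<^sub>h f (y, \<eta>) = (f y, (f (y + h \<eta>) - f y) / h)\<close> on
  \<open>Y \<times> Y\<close> is the only field related to \<open>f\<close> both by the projection \<open>(y, \<eta>) \<mapsto> y\<close> and by the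
  affine map \<open>(y, \<eta>) \<mapsto> y + h \<eta>\<close>, so affine equivariance gives \<open>\<phi> (S\<^sub>h f) = S\<^sub>h (\<phi> f)\<close>.
  Writing the difference quotient as \<open>\<integral>\<^sub>0\<^sup>1 f'(y + s h \<eta>) \<eta> ds\<close> extends \<open>S\<^sub>h f\<close> to
  \<open>h = 0\<close>, where it is the tangent lift \<open>\<delta> f\<close>, and makes it jointly smooth in \<open>(h, y, \<eta>)\<close>.
  As \<open>\<phi>\<close> maps smooth curves of vector fields to smooth curves, both sides are continuous
  in \<open>h\<close>, and \<open>h \<rightarrow> 0\<close> gives \<open>\<phi> (\<delta> f) = \<delta> (\<phi> f)\<close>. The joint smoothness is the analytic
  core: every iterated derivative of the integrand is a finite sum of explicit terms, which
  are differentiated symbolically and under the integral sign.\<close>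

section \<open>Iterated directional derivatives of smooth maps\<close>

lemma iter_dd_append: "iter_dd f (ws @ vs) = iter_dd (iter_dd f vs) ws"
  by (induction ws) auto

lemma smooth_iter_dd_quotient:
  "smooth f \<Longrightarrow>
    ((\<lambda>t::real. (iter_dd f vs (x + t *\<^sub>R v) - iter_dd f vs x) /\<^sub>R t) \<longlongrightarrow> iter_dd f (v # vs) x) (at 0)"
  unfolding smooth_def by blast

lemma smooth_iter_dd_seq_continuous:
  "smooth f \<Longrightarrow> (\<forall>k. length (vss k) = length vs) \<Longrightarrow> xs \<longlonglongrightarrow> x \<Longrightarrow>
    (\<forall>i<length vs. (\<lambda>k. vss k ! i) \<longlonglongrightarrow> vs ! i) \<Longrightarrow> (\<lambda>k. iter_dd f (vss k) (xs k)) \<longlonglongrightarrow> iter_dd f vs x"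
  unfolding smooth_def by blast

lemma smooth_gderiv_quotient:
  "smooth g \<Longrightarrow> ((\<lambda>t::real. (g (x + t *\<^sub>R v) - g x) /\<^sub>R t) \<longlongrightarrow> gderiv g x v) (at 0)"
  using smooth_iter_dd_quotient[of g "[]"] by simp

lemma isCont_iter_dd: "smooth f \<Longrightarrow> isCont (iter_dd f vs) x"
  by (rule continuous_at_sequentiallyI)
    (use smooth_iter_dd_seq_continuous[of f "\<lambda>k. vs" vs] in \<open>auto simp: o_def\<close>)

lemma gderiv_eps_delta:
  assumes g: "smooth g" and "e > 0"
  obtains d where "d > 0"
    and "\<And>y u. norm (y - x) < d \<Longrightarrow> norm (u - v) < d \<Longrightarrow> norm (gderiv g y u - gderiv g x v) < e"
proof -
  have "isCont (\<lambda>(y, u). gderiv g y u) (x, v)"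
  proof (rule continuous_at_sequentiallyI)
    fix q :: "nat \<Rightarrow> 'a \<times> 'a" assume "q \<longlonglongrightarrow> (x, v)"
    then have "(\<lambda>k. iter_dd g [snd (q k)] (fst (q k))) \<longlonglongrightarrow> iter_dd g [v] x"
      by (intro smooth_iter_dd_seq_continuous[OF g]) (auto dest: tendsto_fst tendsto_snd)
    then show "(\<lambda>k. (\<lambda>(y, u). gderiv g y u) (q k)) \<longlonglongrightarrow> (\<lambda>(y, u). gderiv g y u) (x, v)"
      by (simp add: case_prod_beta)
  qed
  then obtain d where "d > 0" and d: "\<And>z. dist z (x, v) < d \<Longrightarrow> dist (case z of (y, u) \<Rightarrow> gderiv g y u) (gderiv g x v) < e"
    using \<open>e > 0\<close> unfolding continuous_at_eps_delta by (metis case_prod_conv)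
  have "norm (gderiv g y u - gderiv g x v) < e" if "norm (y - x) < d/2" "norm (u - v) < d/2" for y u
  proof -
    have "dist (y, u) (x, v) \<le> norm (y - x) + norm (u - v)"
      using norm_Pair_le[of "y - x" "u - v"] by (simp add: dist_norm)
    then show ?thesis using d[of "(y, u)"] that by (simp add: dist_norm)
  qed
  then show thesis
    using that[of "d/2"] \<open>d > 0\<close> by simp
qed

lemma smooth_iter_dd:
  assumes "smooth f" shows "smooth (iter_dd f vs)"
  unfolding smooth_def iter_dd_append[symmetric]
proof (intro conjI allI impI)
  fix ws v x
  show "((\<lambda>t::real. (iter_dd f (ws @ vs) (x + t *\<^sub>R v) - iter_dd f (ws @ vs) x) /\<^sub>R t)
      \<longlongrightarrow> iter_dd f ((v # ws) @ vs) x) (at 0)"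
    using smooth_iter_dd_quotient[OF assms] by simp
next
  fix ws x and xs :: "nat \<Rightarrow> 'a" and vss :: "nat \<Rightarrow> 'a list"
  assume len: "\<forall>k. length (vss k) = length ws" and "xs \<longlonglongrightarrow> x"
    and "\<forall>i<length ws. (\<lambda>k. vss k ! i) \<longlonglongrightarrow> ws ! i"
  moreover have "\<forall>i<length (ws @ vs). (\<lambda>k. (vss k @ vs) ! i) \<longlonglongrightarrow> (ws @ vs) ! i"
    using calculation by (auto simp: nth_append)
  ultimately show "(\<lambda>k. iter_dd f (vss k @ vs) (xs k)) \<longlonglongrightarrow> iter_dd f (ws @ vs) x"
    by (intro smooth_iter_dd_seq_continuous[OF assms]) auto
qed

lemma gderiv_eqI:
  "((\<lambda>t::real. (g (x + t *\<^sub>R v) - g x) /\<^sub>R t) \<longlongrightarrow> D) (at 0) \<Longrightarrow> gderiv g x v = D"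
  unfolding gderiv_def by (rule tendsto_Lim) auto

lemma gderiv_zero_right [simp]: "gderiv g x 0 = 0"
  by (rule gderiv_eqI) simp

lemma iter_dd_zero_fun [simp]: "iter_dd (\<lambda>x. 0) ws = (\<lambda>x. 0)"
  by (induction ws) (auto simp: gderiv_eqI)

lemma iter_dd_update_zero:
  assumes "j < length ws" shows "iter_dd f (ws[j := 0]) = (\<lambda>x. 0)"
proof -
  have "ws[j := 0] = take j ws @ 0 # drop (Suc j) ws"
    using assms by (simp add: upd_conv_take_nth_drop)
  then show ?thesis by (simp add: iter_dd_append)
qed

lemma has_vector_derivative_at_iff_quotient:
  "(f has_vector_derivative D) (at x) \<longleftrightarrow> ((\<lambda>h. (f (x + h) - f x) /\<^sub>R h) \<longlongrightarrow> D) (at 0)"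
proof -
  have "\<forall>\<^sub>F h in at (0::real). norm (f (x + h) - f x - h *\<^sub>R D) / norm h = norm ((f (x + h) - f x) /\<^sub>R h - D)"
  proof (rule eventually_at_filter[THEN iffD2, OF always_eventually], intro allI impI)
    fix h :: real assume "h \<noteq> 0"
    then have "(f (x + h) - f x) /\<^sub>R h - D = (1 / h) *\<^sub>R (f (x + h) - f x - h *\<^sub>R D)"
      by (simp add: algebra_simps divide_inverse_commute)
    then show "norm (f (x + h) - f x - h *\<^sub>R D) / norm h = norm ((f (x + h) - f x) /\<^sub>R h - D)"
      by (simp add: divide_inverse_commute)
  qed
  then show ?thesis
    unfolding has_vector_derivative_def has_derivative_at
    by (simp add: bounded_linear_scaleR_left tendsto_cong tendsto_norm_zero_iff LIM_zero_iff)
qed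

lemma smooth_has_vector_derivative_line:
  "smooth g \<Longrightarrow> ((\<lambda>\<sigma>. g (p + \<sigma> *\<^sub>R w)) has_vector_derivative gderiv g (p + \<sigma> *\<^sub>R w) w) (at \<sigma>)"
  unfolding has_vector_derivative_at_iff_quotient
  using smooth_gderiv_quotient[of g "p + \<sigma> *\<^sub>R w" w] by (simp add: scaleR_add_left add.assoc)

lemma smooth_quotient_bound:
  assumes g: "smooth g" and "t \<noteq> 0"
    and B: "\<And>\<sigma>. \<sigma> \<in> closed_segment 0 t \<Longrightarrow> norm (gderiv g (p + \<sigma> *\<^sub>R w) w - C) \<le> B"
  shows "norm ((g (p + t *\<^sub>R w) - g p) /\<^sub>R t - C) \<le> B"
proof -
  let ?F = "\<lambda>\<sigma>. g (p + \<sigma> *\<^sub>R w) - \<sigma> *\<^sub>R C"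
  have "(?F has_vector_derivative gderiv g (p + \<sigma> *\<^sub>R w) w - C) (at \<sigma>)" for \<sigma>
    by (intro has_vector_derivative_diff smooth_has_vector_derivative_line[OF g])
      (auto simp: has_vector_derivative_def intro!: derivative_eq_intros)
  then have "norm (?F t - ?F 0) \<le> B * norm (t - 0)"
  proof (intro differentiable_bound[of "closed_segment 0 t" ?F "\<lambda>\<sigma> h. h *\<^sub>R (gderiv g (p + \<sigma> *\<^sub>R w) w - C)"])
    fix \<sigma> assume "\<sigma> \<in> closed_segment 0 t"
    show "onorm (\<lambda>h. h *\<^sub>R (gderiv g (p + \<sigma> *\<^sub>R w) w - C)) \<le> B"
    proof (rule onorm_le)
      fix h :: real
      show "norm (h *\<^sub>R (gderiv g (p + \<sigma> *\<^sub>R w) w - C)) \<le> B * norm h"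
        using mult_left_mono[OF B[OF \<open>\<sigma> \<in> closed_segment 0 t\<close>] abs_ge_zero[of h]]
        by (simp add: mult.commute)
    qed
  qed (auto simp: has_vector_derivative_def intro: has_derivative_at_withinI)
  moreover have "(g (p + t *\<^sub>R w) - g p) /\<^sub>R t - C = (1 / t) *\<^sub>R (?F t - ?F 0)"
    using \<open>t \<noteq> 0\<close> by (simp add: algebra_simps divide_inverse_commute)
  ultimately show ?thesis
    using \<open>t \<noteq> 0\<close> by (simp add: pos_divide_le_eq)
qed

lemma smooth_quotient_tendsto:
  assumes g: "smooth g" and p: "(p \<longlongrightarrow> x) (at 0)" and w: "(w \<longlongrightarrow> v) (at 0)"
  shows "((\<lambda>t::real. (g (p t + t *\<^sub>R w t) - g (p t)) /\<^sub>R t) \<longlongrightarrow> gderiv g x v) (at 0)"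
proof (rule tendstoI)
  fix e :: real assume "e > 0"
  then obtain d where "d > 0"
    and close: "\<And>y u. norm (y - x) < d \<Longrightarrow> norm (u - v) < d \<Longrightarrow> norm (gderiv g y u - gderiv g x v) < e/2"
    using gderiv_eps_delta[OF g, of "e/2"] by auto
  have "((\<lambda>t. \<bar>t\<bar> * (norm v + d)) \<longlongrightarrow> \<bar>0\<bar> * (norm v + d)) (at (0::real))"
    by (intro tendsto_intros)
  then have "\<forall>\<^sub>F t in at 0. \<bar>t\<bar> * (norm v + d) < d/2"
    using \<open>d > 0\<close> by (auto dest: order_tendstoD(2)[where a = "d/2"])
  moreover have "\<forall>\<^sub>F t in at 0. dist (p t) x < d/2" "\<forall>\<^sub>F t in at 0. dist (w t) v < d"
    using tendstoD[OF p, of "d/2"] tendstoD[OF w, of d] \<open>d > 0\<close> by auto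
  moreover have "\<forall>\<^sub>F t in at (0::real). t \<noteq> 0"
    by (simp add: eventually_at_filter)
  ultimately have "\<forall>\<^sub>F t in at 0. t \<noteq> 0 \<and> dist (p t) x < d/2 \<and> dist (w t) v < d \<and> \<bar>t\<bar> * (norm v + d) < d/2"
    by eventually_elim blast
  then show "\<forall>\<^sub>F t in at 0. dist ((g (p t + t *\<^sub>R w t) - g (p t)) /\<^sub>R t) (gderiv g x v) < e"
  proof (rule eventually_mono, elim conjE)
    fix t :: real
    assume "t \<noteq> 0" "dist (p t) x < d/2" "dist (w t) v < d" "\<bar>t\<bar> * (norm v + d) < d/2"
    show "dist ((g (p t + t *\<^sub>R w t) - g (p t)) /\<^sub>R t) (gderiv g x v) < e"
      unfolding dist_norm
    proof (rule le_less_trans[OF smooth_quotient_bound[OF g \<open>t \<noteq> 0\<close>]])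
      fix \<sigma> assume "\<sigma> \<in> closed_segment 0 t"
      then have "\<bar>\<sigma>\<bar> \<le> \<bar>t\<bar>" by (auto simp: closed_segment_eq_real_ivl split: if_splits)
      moreover have "norm (w t) \<le> norm v + d"
        using norm_triangle_ineq2[of "w t" v] \<open>dist (w t) v < d\<close> by (simp add: dist_norm)
      ultimately have "norm (\<sigma> *\<^sub>R w t) \<le> \<bar>t\<bar> * (norm v + d)"
        by (auto intro: mult_mono)
      then have "norm (p t + \<sigma> *\<^sub>R w t - x) < d"
        using norm_triangle_ineq[of "p t - x" "\<sigma> *\<^sub>R w t"] \<open>dist (p t) x < d/2\<close>
          \<open>\<bar>t\<bar> * (norm v + d) < d/2\<close> by (simp add: dist_norm algebra_simps)
      then show "norm (gderiv g (p t + \<sigma> *\<^sub>R w t) (w t) - gderiv g x v) \<le> e/2"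
        using close \<open>dist (w t) v < d\<close> by (simp add: dist_norm less_imp_le)
    qed (use \<open>e > 0\<close> in simp)
  qed
qed

lemma gderiv_add_right:
  assumes g: "smooth g" shows "gderiv g x (u + w) = gderiv g x u + gderiv g x w"
proof (rule gderiv_eqI)
  have "((\<lambda>t::real. (g ((x + t *\<^sub>R u) + t *\<^sub>R w) - g (x + t *\<^sub>R u)) /\<^sub>R t + (g (x + t *\<^sub>R u) - g x) /\<^sub>R t)
      \<longlongrightarrow> gderiv g x w + gderiv g x u) (at 0)"
    by (intro tendsto_add smooth_quotient_tendsto smooth_gderiv_quotient g tendsto_eq_intros) auto
  then show "((\<lambda>t::real. (g (x + t *\<^sub>R (u + w)) - g x) /\<^sub>R t) \<longlongrightarrow> gderiv g x u + gderiv g x w) (at 0)"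
    by (simp add: algebra_simps)
qed

lemma gderiv_scaleR_right:
  assumes g: "smooth g" shows "gderiv g x (r *\<^sub>R u) = r *\<^sub>R gderiv g x u"
proof (rule gderiv_eqI)
  have "((\<lambda>t. r * t) has_vector_derivative r) (at 0)"
    by (auto simp: has_vector_derivative_def intro!: derivative_eq_intros)
  moreover have "((\<lambda>\<sigma>. g (x + \<sigma> *\<^sub>R u)) has_vector_derivative gderiv g x u) (at (r * 0))"
    using smooth_has_vector_derivative_line[OF g, where p = x and w = u and \<sigma> = 0] by simp
  ultimately have "((\<lambda>t. g (x + (r * t) *\<^sub>R u)) has_vector_derivative r *\<^sub>R gderiv g x u) (at 0)"
    using vector_diff_chain_at by (fastforce simp: o_def)
  then show "((\<lambda>t::real. (g (x + t *\<^sub>R (r *\<^sub>R u)) - g x) /\<^sub>R t) \<longlongrightarrow> r *\<^sub>R gderiv g x u) (at 0)"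
    by (simp add: has_vector_derivative_at_iff_quotient mult.commute)
qed

lemma iter_dd_add_scaleR:
  assumes F: "smooth F" and G: "smooth G"
  shows "iter_dd (\<lambda>x. F x + r *\<^sub>R G x) ws = (\<lambda>x. iter_dd F ws x + r *\<^sub>R iter_dd G ws x)"
proof (induction ws)
  case (Cons w ws)
  have "((\<lambda>t. (iter_dd F ws (x + t *\<^sub>R w) - iter_dd F ws x) /\<^sub>R t
        + r *\<^sub>R ((iter_dd G ws (x + t *\<^sub>R w) - iter_dd G ws x) /\<^sub>R t))
      \<longlongrightarrow> iter_dd F (w # ws) x + r *\<^sub>R iter_dd G (w # ws) x) (at 0)" for x
    by (intro tendsto_intros smooth_iter_dd_quotient[OF F] smooth_iter_dd_quotient[OF G])
  then have "gderiv (\<lambda>x. iter_dd F ws x + r *\<^sub>R iter_dd G ws x) x w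
      = iter_dd F (w # ws) x + r *\<^sub>R iter_dd G (w # ws) x" for x
    by (intro gderiv_eqI) (simp add: algebra_simps)
  then show ?case using Cons by auto
qed simp

lemma iter_dd_Cons_add_scaleR:
  "smooth f \<Longrightarrow> iter_dd f ((a + r *\<^sub>R b) # P) x = iter_dd f (a # P) x + r *\<^sub>R iter_dd f (b # P) x"
  by (simp add: gderiv_add_right gderiv_scaleR_right smooth_iter_dd)

lemma iter_dd_moving_slots_tendsto:
  assumes g: "smooth g" and w: "(w \<longlongrightarrow> v) (at 0)"
  shows "((\<lambda>t::real. iter_dd g (map (\<lambda>\<sigma>. p \<sigma> + t *\<^sub>R q \<sigma>) sl) (z + t *\<^sub>R w t))
      \<longlongrightarrow> iter_dd g (map p sl) z) (at 0)"
  unfolding tendsto_at_iff_sequentially o_def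
proof (intro allI impI)
  fix T :: "nat \<Rightarrow> real" assume "\<forall>i. T i \<in> UNIV - {0}" and T: "T \<longlonglongrightarrow> 0"
  then have "filterlim T (at 0) sequentially"
    by (auto simp: filterlim_at intro: always_eventually)
  then have "(\<lambda>k. w (T k)) \<longlonglongrightarrow> v"
    by (rule filterlim_compose[OF w])
  then have "(\<lambda>k. z + T k *\<^sub>R w (T k)) \<longlonglongrightarrow> z + 0 *\<^sub>R v"
    by (intro tendsto_intros T)
  moreover have "(\<lambda>k. p \<sigma> + T k *\<^sub>R q \<sigma>) \<longlonglongrightarrow> p \<sigma> + 0 *\<^sub>R q \<sigma>" for \<sigma>
    by (intro tendsto_intros T)
  ultimately show "(\<lambda>k. iter_dd g (map (\<lambda>\<sigma>. p \<sigma> + T k *\<^sub>R q \<sigma>) sl) (z + T k *\<^sub>R w (T k)))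
      \<longlonglongrightarrow> iter_dd g (map p sl) z"
    by (intro smooth_iter_dd_seq_continuous[OF g]) auto
qed

lemma iter_dd_moving_slots_quotient:
  assumes "smooth f" and w: "(w \<longlongrightarrow> v) (at 0)"
  shows "((\<lambda>t::real. (iter_dd f (map (\<lambda>\<sigma>. p \<sigma> + t *\<^sub>R q \<sigma>) sl) (z + t *\<^sub>R w t) - iter_dd f (map p sl) z) /\<^sub>R t)
      \<longlongrightarrow> iter_dd f (v # map p sl) z + (\<Sum>j<length sl. iter_dd f ((map p sl)[j := q (sl ! j)]) z)) (at 0)"
  using assms(1)
proof (induction sl arbitrary: f rule: rev_induct)
  case Nil
  then show ?case using smooth_quotient_tendsto[OF Nil tendsto_const w] by simp
next
  case (snoc \<tau> sl)
  let ?fp = "iter_dd f [p \<tau>]" and ?fq = "iter_dd f [q \<tau>]"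
  let ?W = "\<lambda>t::real. map (\<lambda>\<sigma>. p \<sigma> + t *\<^sub>R q \<sigma>) sl" and ?P = "map p sl"
  have fp: "smooth ?fp" and fq: "smooth ?fq"
    by (rule smooth_iter_dd[OF snoc.prems])+
  have last_slot: "iter_dd f (map (\<lambda>\<sigma>. p \<sigma> + t *\<^sub>R q \<sigma>) (sl @ [\<tau>])) y
      = iter_dd ?fp (?W t) y + t *\<^sub>R iter_dd ?fq (?W t) y" for t y
  proof -
    have "iter_dd f [p \<tau> + t *\<^sub>R q \<tau>] = (\<lambda>y. ?fp y + t *\<^sub>R ?fq y)"
      using iter_dd_Cons_add_scaleR[OF snoc.prems, of "p \<tau>" t "q \<tau>" "[]"] by auto
    then show ?thesis
      by (simp only: map_append list.map iter_dd_append iter_dd_add_scaleR[OF fp fq])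
  qed
  have lim: "((\<lambda>t. (iter_dd ?fp (?W t) (z + t *\<^sub>R w t) - iter_dd ?fp ?P z) /\<^sub>R t
        + iter_dd ?fq (?W t) (z + t *\<^sub>R w t))
      \<longlongrightarrow> (iter_dd ?fp (v # ?P) z + (\<Sum>j<length sl. iter_dd ?fp (?P[j := q (sl ! j)]) z))
        + iter_dd ?fq ?P z) (at 0)"
    by (intro tendsto_add snoc.IH[OF fp] iter_dd_moving_slots_tendsto[OF fq w])
  have "\<forall>\<^sub>F t in at 0. (iter_dd ?fp (?W t) (z + t *\<^sub>R w t) - iter_dd ?fp ?P z) /\<^sub>R t
        + iter_dd ?fq (?W t) (z + t *\<^sub>R w t)
      = (iter_dd f (map (\<lambda>\<sigma>. p \<sigma> + t *\<^sub>R q \<sigma>) (sl @ [\<tau>])) (z + t *\<^sub>R w t)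
        - iter_dd f (map p (sl @ [\<tau>])) z) /\<^sub>R t"
    unfolding last_slot by (auto simp: eventually_at_filter algebra_simps iter_dd_append)
  moreover have "(\<Sum>j<length (sl @ [\<tau>]). iter_dd f ((map p (sl @ [\<tau>]))[j := q ((sl @ [\<tau>]) ! j)]) z)
      = (\<Sum>j<length sl. iter_dd ?fp (?P[j := q (sl ! j)]) z) + iter_dd ?fq ?P z"
    by (auto simp: nth_append list_update_append iter_dd_append intro!: sum.cong)
  ultimately show ?case
    using lim by (simp add: iter_dd_append add.assoc tendsto_cong)
qed

lemma iter_dd_compose_affine:
  assumes "linear L" shows "iter_dd (\<lambda>x. g (L x + b)) vs = (\<lambda>x. iter_dd g (map L vs) (L x + b))"
  by (induction vs) (simp_all add: gderiv_def linear_add[OF assms] linear_scale[OF assms] algebra_simps)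

lemma smooth_compose_affine:
  fixes L :: "'a::real_normed_vector \<Rightarrow> 'b::real_normed_vector" and g :: "'b \<Rightarrow> 'c::real_normed_vector"
  assumes g: "smooth g" and L: "bounded_linear L"
  shows "smooth (\<lambda>x. g (L x + b))"
  unfolding smooth_def iter_dd_compose_affine[OF bounded_linear.linear[OF L]]
proof (intro conjI allI impI)
  fix vs v x
  show "((\<lambda>t::real. (iter_dd g (map L vs) (L (x + t *\<^sub>R v) + b) - iter_dd g (map L vs) (L x + b)) /\<^sub>R t)
      \<longlongrightarrow> iter_dd g (map L (v # vs)) (L x + b)) (at 0)"
    using smooth_iter_dd_quotient[OF g, of "map L vs" "L x + b" "L v"]
    by (simp add: linear_add[OF bounded_linear.linear[OF L]] linear_scale[OF bounded_linear.linear[OF L]]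
        algebra_simps)
next
  fix vs x and xs :: "nat \<Rightarrow> 'a" and vss :: "nat \<Rightarrow> 'a list"
  assume "\<forall>k. length (vss k) = length vs" "xs \<longlonglongrightarrow> x" "\<forall>i<length vs. (\<lambda>k. vss k ! i) \<longlonglongrightarrow> vs ! i"
  then show "(\<lambda>k. iter_dd g (map L (vss k)) (L (xs k) + b)) \<longlonglongrightarrow> iter_dd g (map L vs) (L x + b)"
    by (intro smooth_iter_dd_seq_continuous[OF g]) (auto intro: bounded_linear.tendsto[OF L] tendsto_add)
qed

lemma iter_dd_pair:
  assumes F: "smooth F" and G: "smooth G"
  shows "iter_dd (\<lambda>x. (F x, G x)) vs = (\<lambda>x. (iter_dd F vs x, iter_dd G vs x))"
proof (induction vs)
  case (Cons v vs)
  have "((\<lambda>t::real. ((iter_dd F vs (x + t *\<^sub>R v) - iter_dd F vs x) /\<^sub>R t,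
      (iter_dd G vs (x + t *\<^sub>R v) - iter_dd G vs x) /\<^sub>R t)) \<longlongrightarrow> (iter_dd F (v # vs) x, iter_dd G (v # vs) x)) (at 0)" for x
    by (intro tendsto_Pair smooth_iter_dd_quotient F G)
  then show ?case
    using Cons by (auto intro!: gderiv_eqI)
qed simp

lemma smooth_pair:
  assumes F: "smooth F" and G: "smooth G"
  shows "smooth (\<lambda>x. (F x, G x))"
  unfolding smooth_def iter_dd_pair[OF F G]
proof (intro conjI allI impI)
  fix vs v x
  show "((\<lambda>t::real. ((iter_dd F vs (x + t *\<^sub>R v), iter_dd G vs (x + t *\<^sub>R v)) - (iter_dd F vs x, iter_dd G vs x)) /\<^sub>R t)
      \<longlongrightarrow> (iter_dd F (v # vs) x, iter_dd G (v # vs) x)) (at 0)"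
    using tendsto_Pair[OF smooth_iter_dd_quotient[OF F] smooth_iter_dd_quotient[OF G]] by simp
next
  fix vs x and xs :: "nat \<Rightarrow> 'a" and vss :: "nat \<Rightarrow> 'a list"
  assume "\<forall>k. length (vss k) = length vs" "xs \<longlonglongrightarrow> x" "\<forall>i<length vs. (\<lambda>k. vss k ! i) \<longlonglongrightarrow> vs ! i"
  then show "(\<lambda>k. (iter_dd F (vss k) (xs k), iter_dd G (vss k) (xs k))) \<longlonglongrightarrow> (iter_dd F vs x, iter_dd G vs x)"
    by (intro tendsto_Pair smooth_iter_dd_seq_continuous[OF F] smooth_iter_dd_seq_continuous[OF G])
qed

section \<open>Symbolic derivatives of the integrand\<close>

text \<open>At \<open>x = (h, y, \<eta>)\<close> and for directions \<open>vs = [(k\<^sub>i, a\<^sub>i, b\<^sub>i)]\<close>, the term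
  \<open>DTerm c p q ks sl\<close> at parameter \<open>s\<close> denotes
  \<open>c s\<^sup>p h\<^sup>q (\<Prod>i\<in>ks. k\<^sub>i) d\<^sup>mf(y + s h \<eta>)(slots)\<close> with \<open>m = length sl\<close>, where the slots
  \<open>Eta\<close>, \<open>Dy i\<close>, \<open>Deta i\<close> are filled with \<open>\<eta>\<close>, \<open>a\<^sub>i\<close>, \<open>b\<^sub>i\<close>.\<close>

datatype slot = Eta | Dy nat | Deta nat

datatype dterm = DTerm real nat nat "nat list" "slot list"

fun slot_val :: "real \<times> ('a::real_normed_vector \<times> 'a) \<Rightarrow> (real \<times> ('a \<times> 'a)) list \<Rightarrow> slot \<Rightarrow> 'a" where
  "slot_val x vs Eta = snd (snd x)"
| "slot_val x vs (Dy i) = fst (snd (vs ! i))"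
| "slot_val x vs (Deta i) = snd (snd (vs ! i))"

fun slot_shift :: "slot \<Rightarrow> slot" where
  "slot_shift Eta = Eta"
| "slot_shift (Dy i) = Dy (Suc i)"
| "slot_shift (Deta i) = Deta (Suc i)"

definition base_point :: "real \<Rightarrow> real \<times> ('a::real_normed_vector \<times> 'a) \<Rightarrow> 'a" where
  "base_point s x = fst (snd x) + (s * fst x) *\<^sub>R snd (snd x)"

fun dterm_val ::
  "('a::real_normed_vector \<Rightarrow> 'a) \<Rightarrow> dterm \<Rightarrow> real \<Rightarrow> real \<times> ('a \<times> 'a) \<Rightarrow> (real \<times> ('a \<times> 'a)) list \<Rightarrow> 'a"
where
  "dterm_val f (DTerm c p q ks sl) s x vs =
     (c * s ^ p * fst x ^ q * (\<Prod>i\<leftarrow>ks. fst (vs ! i))) *\<^sub>R iter_dd f (map (slot_val x vs) sl) (base_point s x)"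

definition dsum_val ::
  "('a::real_normed_vector \<Rightarrow> 'a) \<Rightarrow> dterm list \<Rightarrow> real \<Rightarrow> real \<times> ('a \<times> 'a) \<Rightarrow> (real \<times> ('a \<times> 'a)) list \<Rightarrow> 'a"
where
  "dsum_val f E s x vs = (\<Sum>T\<leftarrow>E. dterm_val f T s x vs)"

text \<open>Along \<open>x + t (k, a, b)\<close> the base point moves as
  \<open>y + s h \<eta> + t (a + s k \<eta> + s h b) + t\<^sup>2 s k b\<close>, the factor \<open>h\<^sup>q\<close> contributes
  \<open>q h\<^sup>q\<^sup>-\<^sup>1 k\<close>, and every \<open>Eta\<close> slot moves with velocity \<open>b\<close>; the new direction gets
  index 0. For \<open>q = 0\<close> the first term has coefficient 0, so the truncated \<open>q - 1\<close> is harmless.\<close>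

fun dterm_deriv :: "dterm \<Rightarrow> dterm list" where
  "dterm_deriv (DTerm c p q ks sl) =
     [DTerm (c * real q) p (q - 1) (0 # map Suc ks) (map slot_shift sl),
      DTerm c p q (map Suc ks) (Dy 0 # map slot_shift sl),
      DTerm c (Suc p) q (0 # map Suc ks) (Eta # map slot_shift sl),
      DTerm c (Suc p) (Suc q) (map Suc ks) (Deta 0 # map slot_shift sl)]
     @ map (\<lambda>j. DTerm c p q (map Suc ks) ((map slot_shift sl)[j := Deta 0]))
         (filter (\<lambda>j. sl ! j = Eta) [0..<length sl])"

definition dsum_deriv :: "dterm list \<Rightarrow> dterm list" where
  "dsum_deriv E = concat (map dterm_deriv E)"

lemma dsum_val_Nil [simp]: "dsum_val f [] s x vs = 0"
  and dsum_val_Cons [simp]: "dsum_val f (T # E) s x vs = dterm_val f T s x vs + dsum_val f E s x vs"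
  and dsum_val_append [simp]: "dsum_val f (E @ E') s x vs = dsum_val f E s x vs + dsum_val f E' s x vs"
  by (simp_all add: dsum_val_def)

lemma slot_val_shift [simp]: "slot_val x (v # vs) (slot_shift \<sigma>) = slot_val x vs \<sigma>"
  by (cases \<sigma>) auto

lemma dsum_val_dterm_deriv:
  fixes f :: "'a::real_normed_vector \<Rightarrow> 'a" and y \<eta> :: 'a and h s :: real
    and vs :: "(real \<times> ('a \<times> 'a)) list" and sl :: "slot list" and ks :: "nat list"
  assumes f: "smooth f"
  defines "P \<equiv> map (slot_val (h, y, \<eta>) vs) sl" and "z \<equiv> y + (s * h) *\<^sub>R \<eta>"
    and "K \<equiv> (\<Prod>i\<leftarrow>ks. fst (vs ! i))"
  shows "dsum_val f (dterm_deriv (DTerm c p q ks sl)) s (h, y, \<eta>) ((k, a, b) # vs)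
    = (c * s ^ p * K * (real q * h ^ (q - 1) * k)) *\<^sub>R iter_dd f P z
      + (c * s ^ p * h ^ q * K) *\<^sub>R (iter_dd f ((a + (s * k) *\<^sub>R \<eta> + (s * h) *\<^sub>R b) # P) z
        + (\<Sum>j<length sl. iter_dd f (P[j := if sl ! j = Eta then b else 0]) z))"
proof -
  let ?x = "(h, y, \<eta>)" and ?vs = "(k, a, b) # vs"
  have slots: "map (slot_val ?x ?vs) (map slot_shift sl) = P"
    by (simp add: P_def)
  have base: "base_point s ?x = z"
    by (simp add: base_point_def z_def)
  have prod: "(\<Prod>i\<leftarrow>map Suc ks. fst (?vs ! i)) = K"
    by (simp add: K_def o_def)
  have eta_terms: "dsum_val f (map (\<lambda>j. DTerm c p q (map Suc ks) ((map slot_shift sl)[j := Deta 0]))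
        (filter (\<lambda>j. sl ! j = Eta) [0..<length sl])) s ?x ?vs
      = (c * s ^ p * h ^ q * K) *\<^sub>R (\<Sum>j<length sl. iter_dd f (P[j := if sl ! j = Eta then b else 0]) z)"
  proof -
    have "dsum_val f (map (\<lambda>j. DTerm c p q (map Suc ks) ((map slot_shift sl)[j := Deta 0]))
        (filter (\<lambda>j. sl ! j = Eta) [0..<length sl])) s ?x ?vs
      = (\<Sum>j\<leftarrow>filter (\<lambda>j. sl ! j = Eta) [0..<length sl]. (c * s ^ p * h ^ q * K) *\<^sub>R iter_dd f (P[j := b]) z)"
      unfolding dsum_val_def map_map o_def
      using slots by (simp add: map_update base K_def o_def)
    also have "\<dots> = (\<Sum>j<length sl. (c * s ^ p * h ^ q * K) *\<^sub>R iter_dd f (P[j := if sl ! j = Eta then b else 0]) z)"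
      by (auto simp: sum_list_map_filter' interv_sum_list_conv_sum_set_nat atLeast0LessThan
          iter_dd_update_zero P_def intro!: sum.cong)
    finally show ?thesis by (simp add: scaleR_sum_right)
  qed
  have "iter_dd f ((a + (s * k) *\<^sub>R \<eta> + (s * h) *\<^sub>R b) # P) z
      = iter_dd f (a # P) z + (s * k) *\<^sub>R iter_dd f (\<eta> # P) z + (s * h) *\<^sub>R iter_dd f (b # P) z"
    by (simp only: iter_dd_Cons_add_scaleR[OF f])
  then show ?thesis
    unfolding dterm_deriv.simps dsum_val_append eta_terms
    using slots base prod by (simp add: algebra_simps K_def)
qed

lemma slot_val_add_scaleR:
  "slot_val (x + t *\<^sub>R (k, a, b)) vs = (\<lambda>\<sigma>. slot_val x vs \<sigma> + t *\<^sub>R (if \<sigma> = Eta then b else 0))"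
  by (rule ext, case_tac \<sigma>) auto

lemma base_point_add_scaleR:
  "base_point s ((h, y, \<eta>) + t *\<^sub>R (k, a, b))
    = base_point s (h, y, \<eta>) + t *\<^sub>R ((a + (s * k) *\<^sub>R \<eta> + (s * h) *\<^sub>R b) + t *\<^sub>R ((s * k) *\<^sub>R b))"
  by (simp add: base_point_def algebra_simps)

lemma dterm_val_has_vector_derivative:
  assumes f: "smooth f"
  shows "((\<lambda>t. dterm_val f T s (x + t *\<^sub>R v) vs) has_vector_derivative dsum_val f (dterm_deriv T) s x (v # vs)) (at 0)"
proof -
  obtain c p q ks sl where T: "T = DTerm c p q ks sl" by (cases T)
  obtain h y \<eta> where x: "x = (h, y, \<eta>)" by (cases x) auto
  obtain k a b where v: "v = (k, a, b)" by (cases v) auto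
  define K where "K = (\<Prod>i\<leftarrow>ks. fst (vs ! i))"
  define z where "z = y + (s * h) *\<^sub>R \<eta>"
  define z' where "z' = a + (s * k) *\<^sub>R \<eta> + (s * h) *\<^sub>R b"
  define C where "C t = c * s ^ p * (h + t * k) ^ q * K" for t
  define F where "F t = iter_dd f (map (\<lambda>\<sigma>. slot_val x vs \<sigma> + t *\<^sub>R (if \<sigma> = Eta then b else 0)) sl)
    (z + t *\<^sub>R (z' + t *\<^sub>R ((s * k) *\<^sub>R b)))" for t
  have along_line: "dterm_val f T s (x + t *\<^sub>R v) vs = C t *\<^sub>R F t" for t
    unfolding T v dterm_val.simps slot_val_add_scaleR unfolding x base_point_add_scaleR
    by (simp add: C_def K_def F_def z_def z'_def base_point_def x)
  have "((\<lambda>t. z' + t *\<^sub>R ((s * k) *\<^sub>R b)) \<longlongrightarrow> z' + 0 *\<^sub>R ((s * k) *\<^sub>R b)) (at 0)"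
    by (intro tendsto_intros)
  then have "(F has_vector_derivative iter_dd f (z' # map (slot_val x vs) sl) z
      + (\<Sum>j<length sl. iter_dd f ((map (slot_val x vs) sl)[j := if sl ! j = Eta then b else 0]) z)) (at 0)"
    unfolding has_vector_derivative_at_iff_quotient F_def
    using iter_dd_moving_slots_quotient[OF f, of "\<lambda>t. z' + t *\<^sub>R ((s * k) *\<^sub>R b)" z'] by simp
  moreover have "(C has_field_derivative c * s ^ p * K * (real q * h ^ (q - 1) * k)) (at 0)"
    unfolding C_def by (auto intro!: derivative_eq_intros)
  ultimately have "((\<lambda>t. C t *\<^sub>R F t) has_vector_derivative
      C 0 *\<^sub>R (iter_dd f (z' # map (slot_val x vs) sl) z
        + (\<Sum>j<length sl. iter_dd f ((map (slot_val x vs) sl)[j := if sl ! j = Eta then b else 0]) z))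
      + (c * s ^ p * K * (real q * h ^ (q - 1) * k)) *\<^sub>R F 0) (at 0)"
    by (rule has_vector_derivative_scaleR[rotated])
  then show ?thesis
    unfolding along_line unfolding T x v dsum_val_dterm_deriv[OF f]
    by (simp add: z_def z'_def K_def C_def F_def x algebra_simps)
qed

lemma dsum_val_has_vector_derivative:
  "smooth f \<Longrightarrow>
    ((\<lambda>t. dsum_val f E s (x + t *\<^sub>R v) vs) has_vector_derivative dsum_val f (dsum_deriv E) s x (v # vs)) (at 0)"
  by (induction E) (auto simp: dsum_deriv_def intro!: has_vector_derivative_add dterm_val_has_vector_derivative)

fun slot_wf :: "nat \<Rightarrow> slot \<Rightarrow> bool" where
  "slot_wf n Eta = True"
| "slot_wf n (Dy i) = (i < n)"
| "slot_wf n (Deta i) = (i < n)"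

fun dterm_wf :: "nat \<Rightarrow> dterm \<Rightarrow> bool" where
  "dterm_wf n (DTerm c p q ks sl) = ((\<forall>i\<in>set ks. i < n) \<and> (\<forall>\<sigma>\<in>set sl. slot_wf n \<sigma>))"

lemma slot_wf_shift: "slot_wf n \<sigma> \<Longrightarrow> slot_wf (Suc n) (slot_shift \<sigma>)"
  by (cases \<sigma>) auto

lemma dterm_wf_deriv: "dterm_wf n T \<Longrightarrow> T' \<in> set (dterm_deriv T) \<Longrightarrow> dterm_wf (Suc n) T'"
  by (cases T) (auto simp: slot_wf_shift dest!: set_update_subset_insert[THEN subsetD])

lemma dsum_deriv_wf: "\<forall>T\<in>set E. dterm_wf n T \<Longrightarrow> \<forall>T\<in>set (dsum_deriv E). dterm_wf (Suc n) T"
  by (auto simp: dsum_deriv_def intro: dterm_wf_deriv)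

lemma tendsto_prod_list:
  fixes g :: "'c \<Rightarrow> 'i \<Rightarrow> 'b::real_normed_field"
  shows "(\<And>i. i \<in> set is \<Longrightarrow> ((\<lambda>k. g k i) \<longlongrightarrow> g0 i) F) \<Longrightarrow>
    ((\<lambda>k. \<Prod>i\<leftarrow>is. g k i) \<longlongrightarrow> (\<Prod>i\<leftarrow>is. g0 i)) F"
  by (induction "is") (auto intro!: tendsto_mult)

lemma dterm_val_seq_continuous:
  assumes f: "smooth f" and wf: "dterm_wf (length vs) T" and len: "\<forall>k. length (vss k) = length vs"
    and s: "ss \<longlonglongrightarrow> s" and x: "xs \<longlonglongrightarrow> x" and vs: "\<forall>i<length vs. (\<lambda>k. vss k ! i) \<longlonglongrightarrow> vs ! i"
  shows "(\<lambda>k. dterm_val f T (ss k) (xs k) (vss k)) \<longlonglongrightarrow> dterm_val f T s x vs"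
proof (cases T)
  case (DTerm c p q ks sl)
  have "(\<lambda>k. \<Prod>i\<leftarrow>ks. fst (vss k ! i)) \<longlonglongrightarrow> (\<Prod>i\<leftarrow>ks. fst (vs ! i))"
    using wf vs by (intro tendsto_prod_list tendsto_fst) (auto simp: DTerm)
  moreover have "(\<lambda>k. iter_dd f (map (slot_val (xs k) (vss k)) sl) (base_point (ss k) (xs k)))
      \<longlonglongrightarrow> iter_dd f (map (slot_val x vs) sl) (base_point s x)"
  proof (rule smooth_iter_dd_seq_continuous[OF f])
    show "(\<lambda>k. base_point (ss k) (xs k)) \<longlonglongrightarrow> base_point s x"
      unfolding base_point_def by (intro tendsto_intros s x)
    have "(\<lambda>k. slot_val (xs k) (vss k) \<sigma>) \<longlonglongrightarrow> slot_val x vs \<sigma>" if "slot_wf (length vs) \<sigma>" for \<sigma>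
      by (cases \<sigma>) (use that vs x in \<open>auto intro!: tendsto_fst tendsto_snd\<close>)
    with wf
    show "\<forall>i<length (map (slot_val x vs) sl).
        (\<lambda>k. map (slot_val (xs k) (vss k)) sl ! i) \<longlonglongrightarrow> map (slot_val x vs) sl ! i"
      by (simp add: DTerm)
  qed simp
  ultimately show ?thesis
    unfolding DTerm dterm_val.simps by (intro tendsto_intros s x)
qed

lemma dsum_val_seq_continuous:
  assumes "smooth f" and "\<forall>T\<in>set E. dterm_wf (length vs) T" and "\<forall>k. length (vss k) = length vs"
    and "ss \<longlonglongrightarrow> s" and "xs \<longlonglongrightarrow> x" and "\<forall>i<length vs. (\<lambda>k. vss k ! i) \<longlonglongrightarrow> vs ! i"
  shows "(\<lambda>k. dsum_val f E (ss k) (xs k) (vss k)) \<longlonglongrightarrow> dsum_val f E s x vs"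
  using assms(2) by (induction E) (auto intro!: tendsto_add dterm_val_seq_continuous assms)

section \<open>Integrals depending on a parameter\<close>

lemma uniform_limit_seq_compactI:
  fixes G :: "nat \<Rightarrow> 'c::metric_space \<Rightarrow> 'b::metric_space"
  assumes K: "compact K"
    and lim: "\<And>r s s0. strict_mono r \<Longrightarrow> (\<forall>n. s n \<in> K) \<Longrightarrow> s \<longlonglongrightarrow> s0 \<Longrightarrow> s0 \<in> K \<Longrightarrow>
      (\<lambda>n. G (r n) (s n)) \<longlonglongrightarrow> G0 s0"
    and cont: "continuous_on K G0"
  shows "uniform_limit K G G0 sequentially"
proof (rule uniform_limitI, rule ccontr)
  fix e :: real assume "e > 0" and "\<not> (\<forall>\<^sub>F n in sequentially. \<forall>s\<in>K. dist (G n s) (G0 s) < e)"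
  then have "infinite {n. \<exists>s\<in>K. e \<le> dist (G n s) (G0 s)}"
    by (auto simp: infinite_nat_iff_unbounded_le eventually_sequentially not_less)
  then obtain r :: "nat \<Rightarrow> nat" where r: "strict_mono r" and "\<forall>n. \<exists>s\<in>K. e \<le> dist (G (r n) s) (G0 s)"
    using infinite_enumerate by blast
  then obtain s where s: "\<And>n. s n \<in> K" and far: "\<And>n. e \<le> dist (G (r n) (s n)) (G0 (s n))"
    by metis
  obtain l r' where "l \<in> K" and r': "strict_mono r'" and "(s \<circ> r') \<longlonglongrightarrow> l"
    using seq_compactE[OF compact_imp_seq_compact[OF K]] s by metis
  then have "(\<lambda>n. G (r (r' n)) (s (r' n))) \<longlonglongrightarrow> G0 l" and "(\<lambda>n. G0 (s (r' n))) \<longlonglongrightarrow> G0 l"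
    using lim[OF strict_mono_o[OF r r'], of "s \<circ> r'" l] s
      continuous_on_tendsto_compose[OF cont, of "s \<circ> r'" l sequentially]
    by (auto simp: o_def)
  then have "(\<lambda>n. dist (G (r (r' n)) (s (r' n))) (G0 (s (r' n)))) \<longlonglongrightarrow> dist (G0 l) (G0 l)"
    by (rule tendsto_dist)
  then have "\<forall>\<^sub>F n in sequentially. dist (G (r (r' n)) (s (r' n))) (G0 (s (r' n))) < e"
    using \<open>e > 0\<close> by (auto dest: order_tendstoD(2))
  then show False
    using far by (auto simp: eventually_sequentially not_less[symmetric])
qed

lemma integral_seq_continuous:
  fixes G :: "nat \<Rightarrow> real \<Rightarrow> 'b::banach"
  assumes lim: "\<And>r ss s. strict_mono r \<Longrightarrow> ss \<longlonglongrightarrow> s \<Longrightarrow> (\<lambda>n. G (r n) (ss n)) \<longlonglongrightarrow> G0 s"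
    and cont: "\<And>n. continuous_on {0..1} (G n)" and cont0: "continuous_on {0..1} G0"
  shows "(\<lambda>n. integral {0..1} (G n)) \<longlonglongrightarrow> integral {0..1} G0"
proof -
  have "uniform_limit {0..1} G G0 sequentially"
    using lim cont0 by (intro uniform_limit_seq_compactI) auto
  then obtain I J where "\<And>n. (G n has_integral I n) {0..1}" "(G0 has_integral J) {0..1}" "I \<longlonglongrightarrow> J"
    using uniform_limit_integral cont by (metis sequentially_bot)
  then have "(\<lambda>n. integral {0..1} (G n)) = I" and "integral {0..1} G0 = J"
    by (auto intro: integral_unique)
  with \<open>I \<longlonglongrightarrow> J\<close> show ?thesis
    by simp
qed

lemma integral_has_vector_derivative_line:
  fixes H H' :: "real \<Rightarrow> 'x::real_normed_vector \<Rightarrow> 'b::banach"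
  assumes D: "\<And>s y. ((\<lambda>t. H s (y + t *\<^sub>R v)) has_vector_derivative H' s y) (at 0)"
    and cont: "continuous_on UNIV (\<lambda>(s, y). H s y)" and cont': "continuous_on UNIV (\<lambda>(s, y). H' s y)"
  shows "((\<lambda>t. integral {0..1} (\<lambda>s. H s (x + t *\<^sub>R v))) has_vector_derivative integral {0..1} (\<lambda>s. H' s x)) (at 0)"
proof -
  have deriv: "((\<lambda>t. H s (x + t *\<^sub>R v)) has_vector_derivative H' s (x + t *\<^sub>R v)) (at t within UNIV)" for s t
    using D[of s "x + t *\<^sub>R v"] by (simp add: has_vector_derivative_at_iff_quotient scaleR_add_left add.assoc)
  have "continuous_on {0..1} (\<lambda>s. H s (x + t *\<^sub>R v))" for t
    by (rule continuous_on_compose2[OF cont, where f = "\<lambda>s. (s, x + t *\<^sub>R v)", unfolded case_prod_conv])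
      (auto intro!: continuous_intros)
  then have int: "(\<lambda>s. H s (x + t *\<^sub>R v)) integrable_on cbox 0 1" for t
    by (simp flip: interval_cbox add: integrable_continuous_interval)
  have "continuous_on (UNIV \<times> cbox 0 1) (\<lambda>p. H' (snd p) (x + fst p *\<^sub>R v))"
    by (rule continuous_on_compose2[OF cont', where f = "\<lambda>p. (snd p, x + fst p *\<^sub>R v)", unfolded case_prod_conv])
      (auto intro!: continuous_intros)
  then have "((\<lambda>t. integral (cbox 0 1) (\<lambda>s. H s (x + t *\<^sub>R v))) has_vector_derivative
      integral (cbox 0 1) (\<lambda>s. H' s (x + 0 *\<^sub>R v))) (at 0 within UNIV)"
    by (intro leibniz_rule_vector_derivative[where fx = "\<lambda>t s. H' s (x + t *\<^sub>R v)"] deriv int)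
      (auto simp: case_prod_beta)
  then show ?thesis
    by (simp flip: interval_cbox)
qed

lemma continuous_on_dsum_val:
  assumes "smooth f" and "\<forall>T\<in>set E. dterm_wf (length vs) T"
  shows "continuous_on UNIV (\<lambda>(s, x). dsum_val f E s x vs)"
proof (rule continuous_on_sequentiallyI)
  fix u :: "nat \<Rightarrow> real \<times> real \<times> 'a \<times> 'a" and a assume "u \<longlonglongrightarrow> a"
  then show "(\<lambda>n. (\<lambda>(s, x). dsum_val f E s x vs) (u n)) \<longlonglongrightarrow> (\<lambda>(s, x). dsum_val f E s x vs) a"
    using dsum_val_seq_continuous[OF assms, of "\<lambda>k. vs" "\<lambda>n. fst (u n)" "fst a" "\<lambda>n. snd (u n)" "snd a"]
    by (simp add: case_prod_beta tendsto_fst tendsto_snd)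
qed

lemma integral_dsum_val_has_vector_derivative:
  fixes f :: "'a::banach \<Rightarrow> 'a"
  assumes f: "smooth f" and wf: "\<forall>T\<in>set E. dterm_wf (length vs) T"
  shows "((\<lambda>t. integral {0..1} (\<lambda>s. dsum_val f E s (x + t *\<^sub>R v) vs))
    has_vector_derivative integral {0..1} (\<lambda>s. dsum_val f (dsum_deriv E) s x (v # vs))) (at 0)"
  by (intro integral_has_vector_derivative_line dsum_val_has_vector_derivative[OF f] continuous_on_dsum_val[OF f])
    (use wf dsum_deriv_wf[OF wf] in auto)

lemma integral_dsum_val_seq_continuous:
  fixes f :: "'a::banach \<Rightarrow> 'a"
  assumes f: "smooth f" and wf: "\<forall>T\<in>set E. dterm_wf (length vs) T" and len: "\<forall>k. length (vss k) = length vs"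
    and xs: "xs \<longlonglongrightarrow> x" and vss: "\<forall>i<length vs. (\<lambda>k. vss k ! i) \<longlonglongrightarrow> vs ! i"
  shows "(\<lambda>k. integral {0..1} (\<lambda>s. dsum_val f E s (xs k) (vss k))) \<longlonglongrightarrow> integral {0..1} (\<lambda>s. dsum_val f E s x vs)"
proof (rule integral_seq_continuous)
  fix r :: "nat \<Rightarrow> nat" and ss :: "nat \<Rightarrow> real" and s assume "strict_mono r" "ss \<longlonglongrightarrow> s"
  then show "(\<lambda>k. dsum_val f E (ss k) (xs (r k)) (vss (r k))) \<longlonglongrightarrow> dsum_val f E s x vs"
    using len vss LIMSEQ_subseq_LIMSEQ[OF xs] LIMSEQ_subseq_LIMSEQ[of "\<lambda>k. vss k ! _"]
    by (intro dsum_val_seq_continuous[OF f wf]) (auto simp: o_def)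
next
  have "continuous_on {0..1} (\<lambda>s. dsum_val f E s y ws)" if "length ws = length vs" for y ws
    by (rule continuous_on_compose2[OF continuous_on_dsum_val[OF f], where f = "\<lambda>s. (s, y)", unfolded case_prod_conv])
      (use wf that in \<open>auto intro!: continuous_intros\<close>)
  then show "continuous_on {0..1} (\<lambda>s. dsum_val f E s (xs k) (vss k))" "continuous_on {0..1} (\<lambda>s. dsum_val f E s x vs)"
    for k
    using len by auto
qed

section \<open>The difference quotient as a smooth function\<close>

definition diff_quotient :: "('a::banach \<Rightarrow> 'a) \<Rightarrow> real \<times> ('a \<times> 'a) \<Rightarrow> 'a" where
  "diff_quotient f = (\<lambda>(h, y, \<eta>). integral {0..1} (\<lambda>s. gderiv f (y + (s * h) *\<^sub>R \<eta>) \<eta>))"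

fun integrand_deriv :: "nat \<Rightarrow> dterm list" where
  "integrand_deriv 0 = [DTerm 1 0 0 [] [Eta]]"
| "integrand_deriv (Suc n) = dsum_deriv (integrand_deriv n)"

lemma integrand_deriv_wf: "\<forall>T\<in>set (integrand_deriv n). dterm_wf n T"
  by (induction n) (simp_all add: dsum_deriv_wf)

lemma iter_dd_diff_quotient:
  assumes f: "smooth f"
  shows "iter_dd (diff_quotient f) vs = (\<lambda>x. integral {0..1} (\<lambda>s. dsum_val f (integrand_deriv (length vs)) s x vs))"
proof (induction vs)
  case Nil
  show ?case by (auto simp: diff_quotient_def base_point_def fun_eq_iff)
next
  case (Cons v vs)
  have "gderiv (\<lambda>x. integral {0..1} (\<lambda>s. dsum_val f (integrand_deriv (length vs)) s x vs)) x v
      = integral {0..1} (\<lambda>s. dsum_val f (integrand_deriv (length (v # vs))) s x (v # vs))" for x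
    using integral_dsum_val_has_vector_derivative[OF f integrand_deriv_wf, of vs x v]
    by (intro gderiv_eqI) (simp add: has_vector_derivative_at_iff_quotient)
  then show ?case
    by (simp add: Cons.IH)
qed

lemma smooth_diff_quotient:
  assumes f: "smooth f" shows "smooth (diff_quotient f)"
  unfolding smooth_def iter_dd_diff_quotient[OF f]
  using integral_dsum_val_has_vector_derivative[OF f integrand_deriv_wf]
    integral_dsum_val_seq_continuous[OF f integrand_deriv_wf]
  by (auto simp: has_vector_derivative_at_iff_quotient)

lemma diff_quotient_0: "diff_quotient f (0, y, \<eta>) = gderiv f y \<eta>"
  by (simp add: diff_quotient_def)

lemma diff_quotient_nonzero:
  assumes f: "smooth f" and "h \<noteq> 0"
  shows "diff_quotient f (h, y, \<eta>) = (f (y + h *\<^sub>R \<eta>) - f y) /\<^sub>R h"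
proof -
  have "((\<lambda>s. f (y + s *\<^sub>R (h *\<^sub>R \<eta>))) has_vector_derivative gderiv f (y + s *\<^sub>R (h *\<^sub>R \<eta>)) (h *\<^sub>R \<eta>))
      (at s within {0..1})" for s
    using smooth_has_vector_derivative_line[OF f] by (rule has_vector_derivative_at_within)
  then have "((\<lambda>s. h *\<^sub>R gderiv f (y + (s * h) *\<^sub>R \<eta>) \<eta>) has_integral f (y + h *\<^sub>R \<eta>) - f y) {0..1}"
    using fundamental_theorem_of_calculus[of 0 1 "\<lambda>s. f (y + s *\<^sub>R (h *\<^sub>R \<eta>))"]
    by (simp add: gderiv_scaleR_right[OF f])
  then have "h *\<^sub>R diff_quotient f (h, y, \<eta>) = f (y + h *\<^sub>R \<eta>) - f y"
    unfolding diff_quotient_def by (simp flip: integral_cmul add: integral_unique)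
  with \<open>h \<noteq> 0\<close> show ?thesis
    by (metis scaleR_scaleR left_inverse scaleR_one)
qed

section \<open>Secant lifts\<close>

lemma related_linear: "linear B \<Longrightarrow> related B F G \<longleftrightarrow> (\<forall>y. B (F y) = G (B y))"
proof -
  assume B: "linear B"
  have "\<forall>\<^sub>F t in at (0::real). (B (y + t *\<^sub>R F y) - B y) /\<^sub>R t = B (F y)" for y
    by (auto simp: eventually_at_filter linear_add[OF B] linear_scale[OF B])
  then have "((\<lambda>t::real. (B (y + t *\<^sub>R F y) - B y) /\<^sub>R t) \<longlongrightarrow> G (B y)) (at 0)
      \<longleftrightarrow> ((\<lambda>t::real. B (F y)) \<longlongrightarrow> G (B y)) (at 0)" for y
    by (rule tendsto_cong)
  then show ?thesis
    unfolding related_def by (simp add: tendsto_const_iff)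
qed

lemma bounded_linear_shear: "bounded_linear (\<lambda>p. fst p + h *\<^sub>R snd p)"
  by (intro bounded_linear_add bounded_linear_fst bounded_linear_compose[OF bounded_linear_scaleR_right]
    bounded_linear_snd)

lemma affine_map_bounded_linear: "bounded_linear L \<Longrightarrow> affine_map L"
  unfolding affine_map_def by (intro exI[of _ L] exI[of _ 0]) simp

lemma add_scaleR_eq_iff:
  fixes a b c :: "'a::real_vector"
  shows "h \<noteq> 0 \<Longrightarrow> a + h *\<^sub>R b = c \<longleftrightarrow> b = (c - a) /\<^sub>R h"
  by (metis add_diff_cancel_left' diff_add_cancel scaleR_scaleR left_inverse scaleR_one right_inverse)

definition secant_lift :: "('a::banach \<Rightarrow> 'a) \<Rightarrow> real \<Rightarrow> 'a \<times> 'a \<Rightarrow> 'a \<times> 'a" where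
  "secant_lift f h = (\<lambda>(y, \<eta>). (f y, diff_quotient f (h, y, \<eta>)))"

lemma secant_lift_0: "secant_lift f 0 = tangent_lift f"
  by (simp add: secant_lift_def tangent_lift_def diff_quotient_0)

lemma secant_lift_nonzero:
  "smooth f \<Longrightarrow> h \<noteq> 0 \<Longrightarrow> secant_lift f h (y, \<eta>) = (f y, (f (y + h *\<^sub>R \<eta>) - f y) /\<^sub>R h)"
  by (simp add: secant_lift_def diff_quotient_nonzero)

lemma smooth_secant_lift:
  assumes f: "smooth f" shows "smooth (\<lambda>p. secant_lift f (fst p) (snd p))"
proof -
  have "smooth (\<lambda>p::real \<times> 'a \<times> 'a. f (fst (snd p) + 0))"
    by (intro smooth_compose_affine f bounded_linear_compose[OF bounded_linear_fst bounded_linear_snd])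
  then have "smooth (\<lambda>p::real \<times> 'a \<times> 'a. (f (fst (snd p)), diff_quotient f p))"
    by (intro smooth_pair smooth_diff_quotient f) simp
  then show ?thesis
    by (simp add: secant_lift_def case_prod_beta)
qed

lemma secant_lift_vector_field:
  assumes f: "smooth f" shows "secant_lift f h \<in> vector_fields"
proof -
  have "smooth (\<lambda>p. secant_lift f (fst ((0, p) + (h, 0))) (snd ((0, p) + (h, 0))))"
    by (intro smooth_compose_affine[OF smooth_secant_lift[OF f]] bounded_linear_Pair bounded_linear_zero
      bounded_linear_ident)
  then show ?thesis
    by (simp add: vector_fields_def)
qed

lemma secant_lift_eq_iff:
  assumes g: "smooth g" and "h \<noteq> 0"
  shows "u = secant_lift g h (y, \<eta>) \<longleftrightarrow> fst u = g y \<and> fst u + h *\<^sub>R snd u = g (y + h *\<^sub>R \<eta>)"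
proof -
  have "u = secant_lift g h (y, \<eta>) \<longleftrightarrow> fst u = g y \<and> snd u = (g (y + h *\<^sub>R \<eta>) - g y) /\<^sub>R h"
    by (simp add: secant_lift_nonzero[OF assms] prod_eq_iff)
  also have "\<dots> \<longleftrightarrow> fst u = g y \<and> fst u + h *\<^sub>R snd u = g (y + h *\<^sub>R \<eta>)"
    using add_scaleR_eq_iff[OF \<open>h \<noteq> 0\<close>, of "g y" "snd u" "g (y + h *\<^sub>R \<eta>)"]
    by (intro conj_cong refl) simp
  finally show ?thesis .
qed

lemma secant_lift_unique:
  fixes g :: "'a::banach \<Rightarrow> 'a"
  assumes g: "smooth g" and "h \<noteq> 0"
  shows "related fst F g \<and> related (\<lambda>p. fst p + h *\<^sub>R snd p) F g \<longleftrightarrow> F = secant_lift g h"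
proof -
  have "related (\<lambda>p. fst p + h *\<^sub>R snd p) F g
      \<longleftrightarrow> (\<forall>p. fst (F p) + h *\<^sub>R snd (F p) = g (fst p + h *\<^sub>R snd p))"
    by (rule related_linear[OF bounded_linear.linear[OF bounded_linear_shear]])
  moreover have "related fst F g \<longleftrightarrow> (\<forall>p. fst (F p) = g (fst p))"
    by (rule related_linear[OF bounded_linear.linear[OF bounded_linear_fst]])
  moreover have "F p = secant_lift g h p
      \<longleftrightarrow> fst (F p) = g (fst p) \<and> fst (F p) + h *\<^sub>R snd (F p) = g (fst p + h *\<^sub>R snd p)" for p
    using secant_lift_eq_iff[OF assms, of "F p" "fst p" "snd p"] by simp
  ultimately show ?thesis
    by (simp only: all_conj_distrib[symmetric] fun_eq_iff)
qed

lemma secant_lift_equivariant: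
  assumes equiv: "affine_equivariant_pair phi psi" and f: "f \<in> vector_fields" and psi_f: "smooth (psi f)"
    and "h \<noteq> 0"
  shows "phi (secant_lift f h) = secant_lift (psi f) h"
proof -
  have "smooth f" using f by (simp add: vector_fields_def)
  have "affine_map (fst :: 'a \<times> 'a \<Rightarrow> 'a)" "affine_map (\<lambda>p::'a \<times> 'a. fst p + h *\<^sub>R snd p)"
    by (intro affine_map_bounded_linear bounded_linear_fst bounded_linear_shear)+
  moreover have "related fst (secant_lift f h) f" "related (\<lambda>p. fst p + h *\<^sub>R snd p) (secant_lift f h) f"
    using secant_lift_unique[OF \<open>smooth f\<close> \<open>h \<noteq> 0\<close>] by auto
  ultimately have "related fst (phi (secant_lift f h)) (psi f)"
    "related (\<lambda>p. fst p + h *\<^sub>R snd p) (phi (secant_lift f h)) (psi f)"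
    using equiv f secant_lift_vector_field[OF \<open>smooth f\<close>] by (auto simp: affine_equivariant_pair_def)
  then show ?thesis
    using secant_lift_unique[OF psi_f \<open>h \<noteq> 0\<close>] by auto
qed

lemma smooth_family_eq_at_0:
  fixes F G :: "real \<Rightarrow> 'a::real_normed_vector \<Rightarrow> 'b::real_normed_vector"
  assumes F: "smooth (\<lambda>p. F (fst p) (snd p))" and G: "smooth (\<lambda>p. G (fst p) (snd p))"
    and eq: "\<And>h. h \<noteq> 0 \<Longrightarrow> F h = G h"
  shows "F 0 = G 0"
proof
  fix q :: 'a
  have to_q: "((\<lambda>h::real. (h, q)) \<longlongrightarrow> (0, q)) (at 0)"
    by (intro tendsto_Pair tendsto_ident_at tendsto_const)
  have "((\<lambda>h. F h q) \<longlongrightarrow> F 0 q) (at 0)"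
    using isCont_tendsto_compose[OF isCont_iter_dd[OF F, where vs = "[]"] to_q] by simp
  moreover have "\<forall>\<^sub>F h in at 0. F h q = G h q"
    by (simp add: eventually_at_filter eq)
  ultimately have "((\<lambda>h. G h q) \<longlongrightarrow> F 0 q) (at 0)"
    by (rule tendsto_cong[THEN iffD1, rotated])
  moreover have "((\<lambda>h. G h q) \<longlongrightarrow> G 0 q) (at 0)"
    using isCont_tendsto_compose[OF isCont_iter_dd[OF G, where vs = "[]"] to_q] by simp
  ultimately show "F 0 q = G 0 q"
    by (rule tendsto_unique[OF at_neq_bot])
qed

theorem theorem2p13:
  fixes phi1 :: "('a::banach \<Rightarrow> 'a) \<Rightarrow> ('a \<Rightarrow> 'a)"
    and phi2 :: "('a \<times> 'a \<Rightarrow> 'a \<times> 'a) \<Rightarrow> ('a \<times> 'a \<Rightarrow> 'a \<times> 'a)"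
    and f :: "'a \<Rightarrow> 'a"
  assumes "integrator_component phi1"
    and "integrator_component phi2"
    and "affine_equivariant_pair phi1 phi1"
    and "affine_equivariant_pair phi1 phi2"
    and "affine_equivariant_pair phi2 phi1"
    and "affine_equivariant_pair phi2 phi2"
    and "f \<in> vector_fields"
  shows "phi2 (tangent_lift f) = tangent_lift (phi1 f)"
proof -
  have f: "smooth f" and phi1_f: "smooth (phi1 f)"
    using assms(1,7) by (simp_all add: integrator_component_def vector_fields_def)
  have "smooth (\<lambda>p. phi2 (secant_lift f (fst p)) (snd p))"
    using assms(2) smooth_secant_lift[OF f] by (simp add: integrator_component_def)
  moreover have "smooth (\<lambda>p. secant_lift (phi1 f) (fst p) (snd p))"
    by (rule smooth_secant_lift[OF phi1_f])
  moreover have "phi2 (secant_lift f h) = secant_lift (phi1 f) h" if "h \<noteq> 0" for h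
    by (rule secant_lift_equivariant[where phi = phi2 and psi = phi1, OF assms(5,7) phi1_f that])
  ultimately have "phi2 (secant_lift f 0) = secant_lift (phi1 f) 0"
    by (rule smooth_family_eq_at_0[where F = "\<lambda>h. phi2 (secant_lift f h)" and G = "secant_lift (phi1 f)"])
  then show ?thesis
    by (simp add: secant_lift_0)
qed

end
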